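(* Let $0 \le \alpha \le \beta < \infty$, let $\varphi\colon \mathbb{R} \to \mathbb{R}$ satisfy $\alpha \le \frac{\varphi(a) - \varphi(b)}{a - b} \le \beta$ for all $a \ne b$, and let $\phi\colon \mathbb{R}^{n_1}\to\mathbb{R}^{n_1}$ act componentwise by $\varphi$. Let $H \in \mathbb{R}^{m \times n_0}$, $G \in \mathbb{R}^{m \times n_1}$, $W \in \mathbb{R}^{n_1 \times n_0}$ and $h(x) = Hx + G\phi(Wx)$. Suppose $T \in \mathbb{R}^{n_1 \times n_1}$ is diagonal and satisfies $G^\top G \preceq T$. Then for all $x, x' \in \mathbb{R}^{n_0}$, $$\|h(x) - h(x')\|_2 \le \Big(\Big\|H + \frac{\alpha+\beta}{2} G W\Big\|_2 + \frac{\beta - \alpha}{2}\,\|W^\top T W\|_2^{1/2}\Big)\|x - x'\|_2.$$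
   Context: $\|A\|_2$ denotes the spectral norm (largest singular value) of a matrix $A$; $\preceq$ is the Loewner order on symmetric matrices. *)

theory Defs
  imports "HOL-Analysis.Analysis"
begin

definition spec_norm :: "real^'n^'m \<Rightarrow> real" where
  "spec_norm A = onorm (\<lambda>x. A *v x)"

definition loewner_le :: "real^'n^'n \<Rightarrow> real^'n^'n \<Rightarrow> bool" where
  "loewner_le A B \<longleftrightarrow> transpose A = A \<and> transpose B = B \<and>
     (\<forall>x. x \<bullet> ((B - A) *v x) \<ge> 0)"

definition diagonal_mat :: "real^'n^'n \<Rightarrow> bool" where
  "diagonal_mat T \<longleftrightarrow> (\<forall>i j. i \<noteq> j \<longrightarrow> T $ i $ j = 0)"

end

theory Submission
  imports Defs
begin

text \<open>Write \<open>c = (\<alpha>+\<beta>)/2\<close>, \<open>r = (\<beta>-\<alpha>)/2\<close>, \<open>d = x - x'\<close> and \<open>u = W d\<close>. The slope bound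
  says \<open>\<phi> a - \<phi> b = c (a - b) + e\<close> with \<open>|e| \<le> r |a - b|\<close>, so
  \<open>h x - h x' = (H + c G W) d + G e\<close> with \<open>|e\<^sub>i| \<le> r |u\<^sub>i|\<close>. The first term is bounded by
  the spectral norm; for the second, \<open>G\<^sup>T G \<preceq> T\<close> with \<open>T\<close> diagonal gives
  \<open>\<parallel>G e\<parallel>\<^sup>2 \<le> e\<^sup>T T e = \<Sum> T\<^sub>i\<^sub>i e\<^sub>i\<^sup>2 \<le> r\<^sup>2 u\<^sup>T T u = r\<^sup>2 d\<^sup>T (W\<^sup>T T W) d \<le> r\<^sup>2 \<parallel>W\<^sup>T T W\<parallel> \<parallel>d\<parallel>\<^sup>2\<close>.\<close>

lemma sector_bound:
  fixes \<phi> :: "real \<Rightarrow> real"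
  assumes "\<And>a b. a \<noteq> b \<Longrightarrow> \<alpha> \<le> (\<phi> a - \<phi> b) / (a - b) \<and> (\<phi> a - \<phi> b) / (a - b) \<le> \<beta>"
  shows "\<bar>\<phi> a - \<phi> b - (\<alpha> + \<beta>) / 2 * (a - b)\<bar> \<le> (\<beta> - \<alpha>) / 2 * \<bar>a - b\<bar>"
proof (cases "a = b")
  case False
  define s where "s = (\<phi> a - \<phi> b) / (a - b)"
  have "\<alpha> \<le> s" "s \<le> \<beta>" using assms[OF False] by (simp_all add: s_def)
  then have "\<bar>s - (\<alpha> + \<beta>) / 2\<bar> \<le> (\<beta> - \<alpha>) / 2" unfolding abs_le_iff by (auto simp: field_simps)
  then have "\<bar>s - (\<alpha> + \<beta>) / 2\<bar> * \<bar>a - b\<bar> \<le> (\<beta> - \<alpha>) / 2 * \<bar>a - b\<bar>"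
    by (rule mult_right_mono) simp
  moreover have "\<phi> a - \<phi> b - (\<alpha> + \<beta>) / 2 * (a - b) = (s - (\<alpha> + \<beta>) / 2) * (a - b)"
    using False by (simp add: s_def field_simps)
  ultimately show ?thesis by (simp add: abs_mult)
qed simp

lemma inner_matrix_vector_transpose:
  fixes A :: "real^'n^'m"
  shows "(A *v x) \<bullet> y = x \<bullet> (transpose A *v y)"
  by (metis dot_lmul_matrix inner_commute transpose_matrix_vector)

lemma norm_matrix_vector_le_spec_norm: "norm (A *v x) \<le> spec_norm A * norm x"
  unfolding spec_norm_def by (rule onorm) simp

lemma spec_norm_nonneg: "0 \<le> spec_norm A"
  unfolding spec_norm_def by (rule onorm_pos_le) simp

lemma quadratic_form_le_spec_norm: "x \<bullet> (A *v x) \<le> spec_norm A * (norm x)\<^sup>2"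
proof -
  have "x \<bullet> (A *v x) \<le> norm x * norm (A *v x)" by (rule norm_cauchy_schwarz)
  also have "\<dots> \<le> norm x * (spec_norm A * norm x)"
    by (rule mult_left_mono[OF norm_matrix_vector_le_spec_norm norm_ge_zero])
  finally show ?thesis by (simp add: power2_eq_square mult_ac)
qed

lemma inner_gram_eq_norm_power2:
  fixes G :: "real^'n^'m"
  shows "v \<bullet> ((transpose G ** G) *v v) = (norm (G *v v))\<^sup>2"
  by (simp only: matrix_vector_mul_assoc[symmetric] inner_matrix_vector_transpose[symmetric]
      power2_norm_eq_inner)

lemma diagonal_mat_mult_vector_nth:
  assumes "diagonal_mat T"
  shows "(T *v v) $ i = T $ i $ i * v $ i"
proof -
  have "(T *v v) $ i = (\<Sum>j\<in>UNIV. T $ i $ j * v $ j)" by (simp add: matrix_vector_mult_def)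
  also have "\<dots> = T $ i $ i * v $ i"
    by (rule sum.remove[where x=i, THEN trans])
      (use assms in \<open>auto simp: diagonal_mat_def intro!: sum.neutral\<close>)
  finally show ?thesis .
qed

lemma inner_diagonal_mat:
  assumes "diagonal_mat T"
  shows "v \<bullet> (T *v v) = (\<Sum>i\<in>UNIV. T $ i $ i * (v $ i)\<^sup>2)"
  by (simp add: inner_vec_def diagonal_mat_mult_vector_nth[OF assms] power2_eq_square mult_ac)

lemma loewner_le_quadratic_form:
  assumes "loewner_le A B"
  shows "v \<bullet> (A *v v) \<le> v \<bullet> (B *v v)"
  using assms by (simp add: loewner_le_def matrix_vector_mult_diff_rdistrib inner_diff_right)

lemma loewner_le_gram_diag_nonneg:
  assumes "loewner_le (transpose G ** G) T" and "diagonal_mat T"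
  shows "0 \<le> T $ i $ i"
proof -
  have "0 \<le> axis i 1 \<bullet> ((transpose G ** G) *v axis i 1)" by (simp add: inner_gram_eq_norm_power2)
  also have "\<dots> \<le> axis i (1::real) \<bullet> (T *v axis i 1)" by (rule loewner_le_quadratic_form[OF assms(1)])
  also have "\<dots> = T $ i $ i" unfolding inner_diagonal_mat[OF assms(2)]
    by (subst sum.remove[of UNIV i]) (auto simp: axis_def intro!: sum.neutral)
  finally show ?thesis .
qed

lemma diagonal_quadratic_form_mono:
  assumes "diagonal_mat T" and "\<And>i. 0 \<le> T $ i $ i" and "\<And>i. \<bar>e $ i\<bar> \<le> r * \<bar>u $ i\<bar>"
  shows "e \<bullet> (T *v e) \<le> r\<^sup>2 * (u \<bullet> (T *v u))"
proof -
  have "T $ i $ i * (e $ i)\<^sup>2 \<le> r\<^sup>2 * (T $ i $ i * (u $ i)\<^sup>2)" for i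
  proof -
    have "(e $ i)\<^sup>2 \<le> (r * \<bar>u $ i\<bar>)\<^sup>2"
      using assms(3)[of i] by (metis abs_ge_zero power2_abs power_mono)
    then have "(e $ i)\<^sup>2 \<le> r\<^sup>2 * (u $ i)\<^sup>2" by (simp add: power_mult_distrib)
    from mult_left_mono[OF this assms(2)[of i]] show ?thesis by (simp add: mult.left_commute)
  qed
  then show ?thesis
    by (simp add: inner_diagonal_mat[OF assms(1)] sum_distrib_left sum_mono)
qed

lemma norm_gram_dominated_le:
  fixes G :: "real^'n1^'m" and W :: "real^'n0^'n1" and T :: "real^'n1^'n1"
  assumes "loewner_le (transpose G ** G) T" and "diagonal_mat T" and "0 \<le> r"
    and "\<And>i. \<bar>e $ i\<bar> \<le> r * \<bar>(W *v d) $ i\<bar>"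
  shows "norm (G *v e) \<le> r * sqrt (spec_norm (transpose W ** T ** W)) * norm d"
proof -
  define S where "S = spec_norm (transpose W ** T ** W)"
  have "(norm (G *v e))\<^sup>2 = e \<bullet> ((transpose G ** G) *v e)" by (rule inner_gram_eq_norm_power2[symmetric])
  also have "\<dots> \<le> e \<bullet> (T *v e)" by (rule loewner_le_quadratic_form[OF assms(1)])
  also have "\<dots> \<le> r\<^sup>2 * ((W *v d) \<bullet> (T *v (W *v d)))"
    by (rule diagonal_quadratic_form_mono[OF assms(2) loewner_le_gram_diag_nonneg[OF assms(1,2)] assms(4)])
  also have "(W *v d) \<bullet> (T *v (W *v d)) = d \<bullet> ((transpose W ** T ** W) *v d)"
    by (simp only: inner_matrix_vector_transpose matrix_vector_mul_assoc matrix_mul_assoc)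
  also have "\<dots> \<le> S * (norm d)\<^sup>2" unfolding S_def by (rule quadratic_form_le_spec_norm)
  also have "r\<^sup>2 * (S * (norm d)\<^sup>2) = (r * sqrt S * norm d)\<^sup>2"
    using spec_norm_nonneg[of "transpose W ** T ** W"]
    by (simp add: S_def power_mult_distrib)
  finally have "(norm (G *v e))\<^sup>2 \<le> (r * sqrt S * norm d)\<^sup>2"
    by (simp add: assms(3) mult_left_mono)
  then show ?thesis unfolding S_def
    by (rule power2_le_imp_le) (simp add: assms(3) spec_norm_nonneg)
qed

theorem mainTheorem5:
  fixes \<alpha> \<beta> :: real
    and \<phi> :: "real \<Rightarrow> real"
    and H :: "real^'n0^'m" and G :: "real^'n1^'m" and W :: "real^'n0^'n1"
    and T :: "real^'n1^'n1"
    and h :: "real^'n0 \<Rightarrow> real^'m"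
    and x x' :: "real^'n0"
  assumes "0 \<le> \<alpha>" and "\<alpha> \<le> \<beta>"
    and "\<And>a b. a \<noteq> b \<Longrightarrow> \<alpha> \<le> (\<phi> a - \<phi> b) / (a - b) \<and> (\<phi> a - \<phi> b) / (a - b) \<le> \<beta>"
    and "h = (\<lambda>y. H *v y + G *v (\<chi> i. \<phi> ((W *v y) $ i)))"
    and "diagonal_mat T"
    and "loewner_le (transpose G ** G) T"
  shows "norm (h x - h x') \<le>
    (spec_norm (H + ((\<alpha> + \<beta>) / 2) *\<^sub>R (G ** W))
      + ((\<beta> - \<alpha>) / 2) * sqrt (spec_norm (transpose W ** T ** W))) * norm (x - x')"
proof -
  define c where "c = (\<alpha> + \<beta>) / 2"
  define d where "d = x - x'"
  define \<Phi> where "\<Phi> y = (\<chi> i. \<phi> ((W *v y) $ i))" for y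
  define e where "e = \<Phi> x - \<Phi> x' - c *\<^sub>R (W *v d)"
  have e_bound: "\<bar>e $ i\<bar> \<le> (\<beta> - \<alpha>) / 2 * \<bar>(W *v d) $ i\<bar>" for i
    using sector_bound[OF assms(3)]
    by (simp add: e_def \<Phi>_def c_def d_def matrix_vector_mult_diff_distrib)
  have "h x - h x' = H *v d + G *v (c *\<^sub>R (W *v d) + e)"
    by (simp add: assms(4) \<Phi>_def[symmetric] d_def e_def matrix_vector_mult_diff_distrib
        algebra_simps)
  also have "\<dots> = H *v d + c *\<^sub>R (G *v (W *v d)) + G *v e"
    by (simp add: matrix_vector_right_distrib matrix_vector_mult_scaleR)
  also have "\<dots> = (H + c *\<^sub>R (G ** W)) *v d + G *v e"
    by (simp add: matrix_vector_mul_assoc matrix_vector_mult_add_rdistrib scaleR_matrix_vector_assoc)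
  finally have "norm (h x - h x') \<le> norm ((H + c *\<^sub>R (G ** W)) *v d) + norm (G *v e)"
    by (simp add: norm_triangle_ineq)
  also have "\<dots> \<le> spec_norm (H + c *\<^sub>R (G ** W)) * norm d
      + (\<beta> - \<alpha>) / 2 * sqrt (spec_norm (transpose W ** T ** W)) * norm d"
    using assms(2) by (intro add_mono norm_matrix_vector_le_spec_norm
        norm_gram_dominated_le[OF assms(6,5) _ e_bound]) simp
  finally show ?thesis by (simp add: c_def d_def algebra_simps)
qed

end
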